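(* Let $(p_{nm})_{n,m\in\{0,1,2\}}$ be a probability distribution on $\mathbb{Z}_3\times\mathbb{Z}_3$ and define $L_1=p_{00}+p_{10}+p_{20}$, $L_2=p_{00}+p_{01}+p_{02}$, $L_3=p_{00}+p_{11}+p_{22}$, $L_4=p_{00}+p_{12}+p_{21}$. If $p_{00}>1/3$, then $L_{\max}:=\max\{L_1,L_2,L_3,L_4\}>1/2$.
   Context: The $p_{nm}$ are the Bell-diagonal probabilities of a two-qutrit state; $L_1,\dots,L_4$ are the weights associated with the four mutually unbiased bases (the four lines through the origin of $\mathbb{Z}_3\times\mathbb{Z}_3$). *)

theory Defs
  imports Complex_Main
begin

end

theory Submission
  imports Defs
begin

text \<open>The four lines through the origin of \<open>\<int>\<^sub>3 \<times> \<int>\<^sub>3\<close> pairwise meet only in the origin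
  and together cover the plane, so \<open>L\<^sub>1 + L\<^sub>2 + L\<^sub>3 + L\<^sub>4 = 1 + 3 p\<^sub>0\<^sub>0 > 2\<close>; the largest
  of four numbers is at least their mean, hence exceeds \<open>1/2\<close>.\<close>

lemma Max4_gt_if_sum_gt:
  fixes a b c d t :: "'a::linordered_field"
  assumes "a + b + c + d > 4 * t"
  shows "Max {a, b, c, d} > t"
  using assms by (simp add: Max_gr_iff)

lemma double_sum_0_2_expand:
  fixes p :: "nat \<Rightarrow> nat \<Rightarrow> 'a::comm_monoid_add"
  shows "(\<Sum>n\<in>{0..2}. \<Sum>m\<in>{0..2}. p n m)
    = p 0 0 + p 0 1 + p 0 2 + p 1 0 + p 1 1 + p 1 2 + p 2 0 + p 2 1 + p 2 2"
proof -
  have "{0..2::nat} = {0, 1, 2}" by auto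
  then show ?thesis by (simp add: ac_simps)
qed

theorem lemma4:
  fixes p :: "nat \<Rightarrow> nat \<Rightarrow> real"
  assumes nonneg: "\<And>n m. n \<in> {0..2} \<Longrightarrow> m \<in> {0..2} \<Longrightarrow> p n m \<ge> 0"
    and total: "(\<Sum>n\<in>{0..2}. \<Sum>m\<in>{0..2}. p n m) = 1"
    and big: "p 0 0 > 1/3"
  shows "Max {p 0 0 + p 1 0 + p 2 0, p 0 0 + p 0 1 + p 0 2,
              p 0 0 + p 1 1 + p 2 2, p 0 0 + p 1 2 + p 2 1} > 1/2"
proof (rule Max4_gt_if_sum_gt)
  have "(p 0 0 + p 1 0 + p 2 0) + (p 0 0 + p 0 1 + p 0 2)
      + (p 0 0 + p 1 1 + p 2 2) + (p 0 0 + p 1 2 + p 2 1)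
      = 3 * p 0 0 + (\<Sum>n\<in>{0..2}. \<Sum>m\<in>{0..2}. p n m)" (is "?lines = _")
    unfolding double_sum_0_2_expand by simp
  also have "\<dots> > 4 * (1/2)"
    using total big by simp
  finally show "?lines > 4 * (1/2)" .
qed

end
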